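(* Let $(q_n),(r_n)$ be complex sequences vanishing faster than any negative power of $|n|$ as $n\to\pm\infty$ with $1-q_nr_n\neq0$ and $1+q_nr_{n+1}\neq0$ for all $n\in\mathbb Z$. Set $D_n=\prod_{j=-\infty}^n(1-q_jr_j)$, $E_n=\prod_{j=-\infty}^n(1+q_jr_{j+1})$, and define $u_n=q_nE_{n-1}/D_n$ and $s_n=r_{n+1}D_n/E_n$. Then $$D_n=\frac1{\prod_{k=-\infty}^{n-1}(1+u_{k+1}s_k)},\qquad E_n=\frac1{\prod_{k=-\infty}^{n}(1-u_ks_k)},$$ $$q_n=u_n\prod_{k=-\infty}^{n-1}\frac{1-u_ks_k}{1+u_{k+1}s_k},\qquad r_n=s_{n-1}\prod_{k=-\infty}^{n-1}\frac{1+u_ks_{k-1}}{1-u_ks_k}.$$ *)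

theory Defs
  imports "HOL-Analysis.Analysis"
begin

definition rapid_decay :: "(int \<Rightarrow> complex) \<Rightarrow> bool" where
  "rapid_decay q \<longleftrightarrow>
     (\<forall>k::nat. ((\<lambda>n. real_of_int \<bar>n\<bar> ^ k * norm (q n)) \<longlongrightarrow> 0) at_top \<and>
               ((\<lambda>n. real_of_int \<bar>n\<bar> ^ k * norm (q n)) \<longlongrightarrow> 0) at_bot)"

definition lprod :: "(int \<Rightarrow> complex) \<Rightarrow> int \<Rightarrow> complex" where
  "lprod f n = (\<Prod>i. f (n - int i))"

end

theory Submission
  imports Defs
begin

text \<open>Rapid decay makes the products defining D and E absolutely convergent, so D and E are
  nonzero, satisfy D n = (1 - q n r n) D (n - 1) and E n = (1 + q n r (n + 1)) E (n - 1), and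
  tend to 1 at minus infinity. Substituting the definitions of u and s into these recursions gives
  1 - u k s k = E (k - 1) / E k  and  1 + u (k + 1) s k = D k / D (k + 1),
  so each of the four products telescopes, and its value is read off from the limits of
  D and E at minus infinity.\<close>

lemma filterlim_minus_of_nat_at_bot: "filterlim (\<lambda>i::nat. a - int i) at_bot sequentially"
  unfolding filterlim_at_bot eventually_sequentially
proof
  fix Z :: int
  show "\<exists>N. \<forall>i\<ge>N. a - int i \<le> Z"
    by (rule exI[of _ "nat (a - Z)"]) auto
qed

lemma filterlim_nat_uminus_at_bot: "filterlim (\<lambda>m::int. nat (- m)) sequentially at_bot"
  unfolding filterlim_at_top eventually_at_bot_linorder
proof
  fix Z :: nat
  show "\<exists>N. \<forall>m\<le>N. Z \<le> nat (- m)"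
    by (rule exI[of _ "- int Z"]) auto
qed

lemma filterlim_add_const_at_bot:
  "filterlim (\<lambda>k. k + c) at_bot (at_bot :: 'a::{linorder, ordered_ab_group_add} filter)"
  unfolding filterlim_at_bot eventually_at_bot_linorder
  by (metis le_diff_eq)

lemma summable_norm_left_tail:
  fixes f :: "int \<Rightarrow> 'a::real_normed_vector"
  assumes decay: "((\<lambda>m. real_of_int \<bar>m\<bar> ^ 2 * norm (f m)) \<longlongrightarrow> 0) at_bot"
  shows "summable (\<lambda>i. norm (f (n - int i)))"
proof (rule summable_comparison_test_ev)
  show "summable (\<lambda>i. 4 * inverse (real i ^ 2))"
    by (intro summable_mult inverse_power_summable) simp
  have "eventually (\<lambda>i. real_of_int \<bar>n - int i\<bar> ^ 2 * norm (f (n - int i)) < 1) sequentially"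
    using order_tendstoD(2)[OF filterlim_compose[OF decay filterlim_minus_of_nat_at_bot]]
    by (simp add: o_def)
  moreover have "eventually (\<lambda>i. 2 * \<bar>n\<bar> < int i) sequentially"
    unfolding eventually_sequentially by (rule exI[of _ "nat (2 * \<bar>n\<bar>) + 1"]) auto
  ultimately show "eventually (\<lambda>i. norm (norm (f (n - int i))) \<le> 4 * inverse (real i ^ 2))
      sequentially"
  proof eventually_elim
    case (elim i)
    have "int i \<le> 2 * \<bar>n - int i\<bar>"
      using elim(2) by arith
    then have "real i \<le> 2 * real_of_int \<bar>n - int i\<bar>"
      by (metis of_int_le_iff of_int_of_nat_eq of_int_mult of_int_numeral)
    then have "real i ^ 2 \<le> (2 * real_of_int \<bar>n - int i\<bar>) ^ 2"
      by (intro power_mono) auto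
    then have "real i ^ 2 * norm (f (n - int i))
        \<le> 4 * (real_of_int \<bar>n - int i\<bar> ^ 2 * norm (f (n - int i)))"
      by (metis mult.assoc mult_right_mono norm_ge_zero power_mult_distrib power2_eq_square
          numeral_Bit0_eq_double)
    also have "\<dots> \<le> 4"
      using elim(1) by simp
    moreover have "0 < real i"
      using elim(2) by simp
    ultimately show ?case
      by (simp add: field_simps)
  qed
qed

lemma rapid_decay_summable_mult:
  assumes "rapid_decay q" and "rapid_decay r"
  shows "summable (\<lambda>i. norm (q (n - int i) * r (n - int i + c)))"
proof (rule summable_comparison_test_ev)
  have "((\<lambda>m. real_of_int \<bar>m\<bar> ^ 2 * norm (q m)) \<longlongrightarrow> 0) at_bot"
    using assms(1) unfolding rapid_decay_def by blast
  then show "summable (\<lambda>i. norm (q (n - int i)))"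
    by (rule summable_norm_left_tail)
  have "((\<lambda>m. real_of_int \<bar>m\<bar> ^ 0 * norm (r m)) \<longlongrightarrow> 0) at_bot"
    using assms(2) unfolding rapid_decay_def by blast
  then have "(\<lambda>i. norm (r (n + c - int i))) \<longlonglongrightarrow> 0"
    using filterlim_compose[OF _ filterlim_minus_of_nat_at_bot] by (simp add: o_def)
  then have "eventually (\<lambda>i. norm (r (n + c - int i)) < 1) sequentially"
    by (rule order_tendstoD(2)) simp
  then have "eventually (\<lambda>i. norm (r (n - int i + c)) < 1) sequentially"
    by (simp add: algebra_simps)
  then show "eventually (\<lambda>i. norm (norm (q (n - int i) * r (n - int i + c)))
      \<le> norm (q (n - int i))) sequentially"
    by eventually_elim (simp add: norm_mult mult_left_le)
qed

lemma lprod_minus_of_nat: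
  assumes "convergent_prod (\<lambda>i. f (n - int i))" and "\<And>j. f j \<noteq> 0"
  shows "lprod f (n - int N) = lprod f n / (\<Prod>i<N. f (n - int i))"
  using prodinf_divide_initial_segment[OF assms(1), of N] assms(2)
  unfolding lprod_def by (simp add: algebra_simps)

lemma lprod_rec:
  assumes "convergent_prod (\<lambda>i. f (n - int i))" and "\<And>j. f j \<noteq> 0"
  shows "lprod f n = f n * lprod f (n - 1)"
  using lprod_minus_of_nat[OF assms, of 1] assms(2)[of n] by simp

lemma lprod_tendsto_one_at_bot:
  assumes "convergent_prod (\<lambda>i. f (- int i))" and nz: "\<And>j. f j \<noteq> 0"
  shows "(lprod f \<longlongrightarrow> 1) at_bot"
proof -
  have "(\<lambda>N. \<Prod>i<N. f (- int i)) \<longlonglongrightarrow> lprod f 0"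
    using convergent_prod_LIMSEQ[OF assms(1)] unfolding lprod_def
    by (simp add: LIMSEQ_lessThan_iff_atMost)
  moreover have "lprod f 0 \<noteq> 0"
    unfolding lprod_def using prodinf_nonzero[OF assms(1)] nz by simp
  ultimately have "(\<lambda>N. lprod f 0 / (\<Prod>i<N. f (- int i))) \<longlonglongrightarrow> lprod f 0 / lprod f 0"
    by (intro tendsto_divide tendsto_const)
  then have "(\<lambda>N. lprod f 0 / (\<Prod>i<N. f (- int i))) \<longlonglongrightarrow> 1"
    using \<open>lprod f 0 \<noteq> 0\<close> by simp
  then have "(\<lambda>N. lprod f (- int N)) \<longlonglongrightarrow> 1"
    using lprod_minus_of_nat[of f 0] assms by simp
  then have "((\<lambda>m. lprod f (- int (nat (- m)))) \<longlongrightarrow> 1) at_bot"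
    by (rule filterlim_compose[OF _ filterlim_nat_uminus_at_bot])
  moreover have "eventually (\<lambda>m. lprod f (- int (nat (- m))) = lprod f m) at_bot"
    using eventually_le_at_bot[of 0] by eventually_elim simp
  ultimately show ?thesis
    by (rule Lim_transform_eventually)
qed

lemma lprod_telescope:
  fixes F :: "int \<Rightarrow> complex"
  assumes nz: "\<And>k. F k \<noteq> 0" and lim: "(F \<longlongrightarrow> L) at_bot" and "L \<noteq> 0"
    and g: "\<And>k. g k = F (k - 1) / F k"
  shows "lprod g n = L / F n"
  unfolding lprod_def
proof (rule prodinf_eq_prod_lim')
  have partial: "(\<Prod>i<N. g (n - int i)) = F (n - int N) / F n" for N
    by (induction N) (simp_all add: nz g algebra_simps)
  have "(\<lambda>N. F (n - int N)) \<longlonglongrightarrow> L"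
    using filterlim_compose[OF lim filterlim_minus_of_nat_at_bot] by (simp add: o_def)
  then show "(\<lambda>N. \<Prod>i<N. g (n - int i)) \<longlonglongrightarrow> L / F n"
    unfolding partial by (intro tendsto_divide tendsto_const) (use nz in auto)
  show "L / F n \<noteq> 0"
    using assms by simp
qed

lemma lprod_rapid_decay:
  assumes "rapid_decay q" and "rapid_decay r"
    and near_one: "\<And>j. norm (f j - 1) = norm (q j * r (j + d))" and nz: "\<And>j. f j \<noteq> 0"
  shows "lprod f n \<noteq> 0" and "lprod f n = f n * lprod f (n - 1)" and "(lprod f \<longlongrightarrow> 1) at_bot"
proof -
  have conv: "convergent_prod (\<lambda>i. f (m - int i))" for m
  proof (rule abs_convergent_prod_imp_convergent_prod, rule summable_imp_abs_convergent_prod)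
    show "summable (\<lambda>i. norm (f (m - int i) - 1))"
      using rapid_decay_summable_mult[OF assms(1,2), of m d] by (simp add: near_one)
  qed
  show "lprod f n \<noteq> 0"
    unfolding lprod_def using prodinf_nonzero[OF conv nz] .
  show "lprod f n = f n * lprod f (n - 1)"
    by (rule lprod_rec[OF conv nz])
  show "(lprod f \<longlongrightarrow> 1) at_bot"
    using lprod_tendsto_one_at_bot[OF _ nz] conv[of 0] by simp
qed

lemma one_minus_mult_rescaled:
  fixes a b D E E' :: "'a::field"
  assumes "D \<noteq> 0" and "E \<noteq> 0" and "E = (1 + a * b) * E'"
  shows "1 - (a * E' / D) * (b * D / E) = E' / E"
  using assms by (simp add: field_simps)

lemma one_plus_mult_rescaled:
  fixes a b D D' E :: "'a::field"
  assumes "D \<noteq> 0" and "E \<noteq> 0" and "D = (1 - a * b) * D'"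
  shows "1 + (a * E / D) * (b * D' / E) = D' / D"
proof -
  have "(a * E / D) * (b * D' / E) = (D' - D) / D"
    using assms by (simp add: field_simps)
  then show ?thesis
    using assms(1) by (simp add: diff_divide_distrib)
qed

theorem proposition3p2:
  fixes q r :: "int \<Rightarrow> complex"
    and D E u s :: "int \<Rightarrow> complex"
  assumes "rapid_decay q" and "rapid_decay r"
    and "\<And>n. 1 - q n * r n \<noteq> 0"
    and "\<And>n. 1 + q n * r (n + 1) \<noteq> 0"
    and D_def: "\<And>n. D n = lprod (\<lambda>j. 1 - q j * r j) n"
    and E_def: "\<And>n. E n = lprod (\<lambda>j. 1 + q j * r (j + 1)) n"
    and u_def: "\<And>n. u n = q n * E (n - 1) / D n"
    and s_def: "\<And>n. s n = r (n + 1) * D n / E n"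
  shows "\<forall>n. D n = 1 / lprod (\<lambda>k. 1 + u (k + 1) * s k) (n - 1)
            \<and> E n = 1 / lprod (\<lambda>k. 1 - u k * s k) n
            \<and> q n = u n * lprod (\<lambda>k. (1 - u k * s k) / (1 + u (k + 1) * s k)) (n - 1)
            \<and> r n = s (n - 1) * lprod (\<lambda>k. (1 + u k * s (k - 1)) / (1 - u k * s k)) (n - 1)"
proof -
  have D_eq: "D = lprod (\<lambda>j. 1 - q j * r j)" and E_eq: "E = lprod (\<lambda>j. 1 + q j * r (j + 1))"
    by (rule ext, rule D_def, rule ext, rule E_def)
  have "norm ((1 - q j * r j) - 1) = norm (q j * r (j + 0))" for j
    by (simp add: norm_minus_commute)
  note D_props = lprod_rapid_decay[OF assms(1,2) this assms(3), folded D_eq]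
  have "norm ((1 + q j * r (j + 1)) - 1) = norm (q j * r (j + 1))" for j
    by simp
  note E_props = lprod_rapid_decay[OF assms(1,2) this assms(4), folded E_eq]
  note D_nz = D_props(1) and D_rec = D_props(2) and D_lim = D_props(3)
  note E_nz = E_props(1) and E_rec = E_props(2) and E_lim = E_props(3)
  have D_shift_lim: "((\<lambda>k. D (k + 1)) \<longlongrightarrow> 1) at_bot"
    using filterlim_compose[OF D_lim filterlim_add_const_at_bot] .
  have minus_us: "1 - u k * s k = E (k - 1) / E k" for k
    unfolding u_def s_def by (rule one_minus_mult_rescaled) (use D_nz E_nz E_rec[of k] in auto)
  have plus_us: "1 + u (k + 1) * s k = D k / D (k + 1)" for k
    unfolding u_def s_def add_diff_cancel_right'
    by (rule one_plus_mult_rescaled) (use D_nz E_nz D_rec[of "k + 1"] in auto)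
  show ?thesis
  proof (intro allI conjI)
    fix n
    show "D n = 1 / lprod (\<lambda>k. 1 + u (k + 1) * s k) (n - 1)"
      using lprod_telescope[of "\<lambda>k. D (k + 1)" 1 _ "n - 1"] D_nz D_shift_lim plus_us by simp
    show "E n = 1 / lprod (\<lambda>k. 1 - u k * s k) n"
      using lprod_telescope[of E 1 _ n] E_nz E_lim minus_us by simp
    show "q n = u n * lprod (\<lambda>k. (1 - u k * s k) / (1 + u (k + 1) * s k)) (n - 1)"
      using lprod_telescope[of "\<lambda>k. E k / D (k + 1)" 1 _ "n - 1"] D_nz E_nz
        tendsto_divide[OF E_lim D_shift_lim] minus_us plus_us u_def by simp
    show "r n = s (n - 1) * lprod (\<lambda>k. (1 + u k * s (k - 1)) / (1 - u k * s k)) (n - 1)"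
      using lprod_telescope[of "\<lambda>k. D k / E k" 1 _ "n - 1"] D_nz E_nz
        tendsto_divide[OF D_lim E_lim] minus_us plus_us[of "k - 1" for k] s_def by simp
  qed
qed
end
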